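(* For every nominal $\mathrm{Perm}$-set $X$, there is an isomorphism of nominal $\mathrm{Sb}$-sets $F(X^{( * )})\cong (F X)^*$.
   Context: Atoms $\mathbb{A}$ (countably infinite); $\mathrm{Sb}$ = monoid of finitely-non-identity functions $\mathbb{A}\to\mathbb{A}$; $\mathrm{Perm}$ its group of bijections. For $M\in\{\mathrm{Sb},\mathrm{Perm}\}$, a nominal $M$-set is an $M$-set in which every element $x$ has a finite support $C$ ($m_1|_C=m_2|_C\Rightarrow m_1x=m_2x$). Elements $x,y$ are separated ($x\perp y$) if they have disjoint supports; $X\otimes Y=\{(x,y)\mid x\perp y\}$. Separated powers: $X^{(0)}=1$, $X^{(n+1)}=X^{(n)}\otimes X$; $X^{( * )}=\coprod_n X^{(n)}$ (separated words). For a nominal $\mathrm{Sb}$-set $Z$, $Z^*=\coprod_n Z^n$ (all words) with pointwise action. $F(X)=(\mathrm{Sb}\times X)/{\sim}$, $\sim$ the least equivalence containing $(m,gx)\sim(mg,x)$ ($g\in\mathrm{Perm}$) and $(m,x)\sim(m',x)$ if $m|_C=m'|_C$ for a $\mathrm{Perm}$-support $C$ of $x$; action $n\cdot[m,x]=[nm,x]$. *)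

theory Defs
  imports Main
begin

text \<open>Atoms are modelled by the countably infinite type nat.\<close>

definition Sb :: "(nat \<Rightarrow> nat) set" where
  "Sb = {m. finite {a. m a \<noteq> a}}"

definition Perm :: "(nat \<Rightarrow> nat) set" where
  "Perm = {m \<in> Sb. bij m}"

definition supports :: "(nat \<Rightarrow> nat) set \<Rightarrow> ((nat \<Rightarrow> nat) \<Rightarrow> 'x \<Rightarrow> 'x) \<Rightarrow> nat set \<Rightarrow> 'x \<Rightarrow> bool" where
  "supports M act C x \<longleftrightarrow>
     (\<forall>m1\<in>M. \<forall>m2\<in>M. (\<forall>a\<in>C. m1 a = m2 a) \<longrightarrow> act m1 x = act m2 x)"

definition nominal_set :: "(nat \<Rightarrow> nat) set \<Rightarrow> 'x set \<Rightarrow> ((nat \<Rightarrow> nat) \<Rightarrow> 'x \<Rightarrow> 'x) \<Rightarrow> bool" where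
  "nominal_set M X act \<longleftrightarrow>
     (\<forall>m\<in>M. \<forall>x\<in>X. act m x \<in> X) \<and>
     (\<forall>x\<in>X. act id x = x) \<and>
     (\<forall>m1\<in>M. \<forall>m2\<in>M. \<forall>x\<in>X. act (m1 \<circ> m2) x = act m1 (act m2 x)) \<and>
     (\<forall>x\<in>X. \<exists>C. finite C \<and> supports M act C x)"

definition separated :: "(nat \<Rightarrow> nat) set \<Rightarrow> ((nat \<Rightarrow> nat) \<Rightarrow> 'x \<Rightarrow> 'x) \<Rightarrow> ((nat \<Rightarrow> nat) \<Rightarrow> 'y \<Rightarrow> 'y)
     \<Rightarrow> 'x \<Rightarrow> 'y \<Rightarrow> bool" where
  "separated M actx acty x y \<longleftrightarrow>
     (\<exists>C D. finite C \<and> finite D \<and> supports M actx C x \<and> supports M acty D y \<and> C \<inter> D = {})"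

definition word_act :: "((nat \<Rightarrow> nat) \<Rightarrow> 'x \<Rightarrow> 'x) \<Rightarrow> (nat \<Rightarrow> nat) \<Rightarrow> 'x list \<Rightarrow> 'x list" where
  "word_act act m w = map (act m) w"

text \<open>Separated words X^(*) of a nominal Perm-set: X^(0) = 1, X^(n+1) = X^(n) \<otimes> X.\<close>
inductive_set sep_words :: "'x set \<Rightarrow> ((nat \<Rightarrow> nat) \<Rightarrow> 'x \<Rightarrow> 'x) \<Rightarrow> 'x list set"
  for X act where
  Nil: "[] \<in> sep_words X act"
| snoc: "w \<in> sep_words X act \<Longrightarrow> x \<in> X \<Longrightarrow> separated Perm (word_act act) act w x
          \<Longrightarrow> w @ [x] \<in> sep_words X act"

text \<open>The free functor F from nominal Perm-sets to nominal Sb-sets.\<close>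
definition F_gen :: "'x set \<Rightarrow> ((nat \<Rightarrow> nat) \<Rightarrow> 'x \<Rightarrow> 'x) \<Rightarrow> (((nat \<Rightarrow> nat) \<times> 'x) \<times> ((nat \<Rightarrow> nat) \<times> 'x)) set" where
  "F_gen X act =
     {((m, act g x), (m \<circ> g, x)) | m g x. m \<in> Sb \<and> g \<in> Perm \<and> x \<in> X} \<union>
     {((m, x), (m', x)) | m m' x. m \<in> Sb \<and> m' \<in> Sb \<and> x \<in> X \<and>
        (\<exists>C. finite C \<and> supports Perm act C x \<and> (\<forall>a\<in>C. m a = m' a))}"

definition F_rel :: "'x set \<Rightarrow> ((nat \<Rightarrow> nat) \<Rightarrow> 'x \<Rightarrow> 'x) \<Rightarrow> (((nat \<Rightarrow> nat) \<times> 'x) \<times> ((nat \<Rightarrow> nat) \<times> 'x)) set" where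
  "F_rel X act = (Id_on (Sb \<times> X) \<union> F_gen X act \<union> (F_gen X act)\<inverse>)\<^sup>*"

definition F_carrier :: "'x set \<Rightarrow> ((nat \<Rightarrow> nat) \<Rightarrow> 'x \<Rightarrow> 'x) \<Rightarrow> ((nat \<Rightarrow> nat) \<times> 'x) set set" where
  "F_carrier X act = (Sb \<times> X) // F_rel X act"

definition F_act :: "'x set \<Rightarrow> ((nat \<Rightarrow> nat) \<Rightarrow> 'x \<Rightarrow> 'x) \<Rightarrow> (nat \<Rightarrow> nat)
     \<Rightarrow> ((nat \<Rightarrow> nat) \<times> 'x) set \<Rightarrow> ((nat \<Rightarrow> nat) \<times> 'x) set" where
  "F_act X act n c = (\<Union>(m, x)\<in>c. F_rel X act `` {(n \<circ> m, x)})"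

definition nom_iso :: "(nat \<Rightarrow> nat) set \<Rightarrow> 'a set \<Rightarrow> ((nat \<Rightarrow> nat) \<Rightarrow> 'a \<Rightarrow> 'a)
     \<Rightarrow> 'b set \<Rightarrow> ((nat \<Rightarrow> nat) \<Rightarrow> 'b \<Rightarrow> 'b) \<Rightarrow> ('a \<Rightarrow> 'b) \<Rightarrow> bool" where
  "nom_iso M A actA B actB f \<longleftrightarrow>
     bij_betw f A B \<and> (\<forall>m\<in>M. \<forall>x\<in>A. f (actA m x) = actB m (f x))"

end

theory Submission
  imports Defs "HOL-Combinatorics.Transposition" "HOL-Library.Disjoint_Sets"
begin

text \<open>The isomorphism sends the class \<open>[m, x\<^sub>1 \<dots> x\<^sub>n]\<close> to \<open>([m, x\<^sub>1], \<dots>, [m, x\<^sub>n])\<close>; this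
  is well defined and equivariant because the generating relation acts on all letters at once.
  The key fact is an explicit description of \<open>F X\<close>: for nominal \<open>X\<close>, \<open>[m, y] = [m', x]\<close> iff
  \<open>y = g x\<close> for a finitely supported permutation \<open>g\<close> such that \<open>m'\<close> and \<open>m \<circ> g\<close> agree on a
  support of \<open>x\<close>; its transitivity rests on supports being closed under intersection.
  For injectivity, the letters of a separated word have pairwise disjoint supports, so the
  permutations obtained letter by letter glue to a single one. For surjectivity, a new letter is
  renamed so that its support avoids that of the word, which keeps the word separated, and the
  substitution is patched on the renamed support.\<close>

section \<open>Finitely supported permutations\<close>

lemma Sb_id: "id \<in> Sb"
  by (simp add: Sb_def)

lemma Perm_id: "id \<in> Perm"
  by (simp add: Perm_def Sb_id)

lemma Perm_Sb: "g \<in> Perm \<Longrightarrow> g \<in> Sb"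
  by (simp add: Perm_def)

lemma Sb_comp:
  assumes "f \<in> Sb" "g \<in> Sb"
  shows "f \<circ> g \<in> Sb"
proof -
  have "{a. (f \<circ> g) a \<noteq> a} \<subseteq> {a. f a \<noteq> a} \<union> {a. g a \<noteq> a}"
    by auto
  then show ?thesis
    using assms unfolding Sb_def by (auto intro: finite_subset)
qed

lemma Perm_comp: "f \<in> Perm \<Longrightarrow> g \<in> Perm \<Longrightarrow> f \<circ> g \<in> Perm"
  by (auto simp: Perm_def Sb_comp bij_comp)

lemma Perm_apply_inv: "g \<in> Perm \<Longrightarrow> g (inv g a) = a"
  by (simp add: Perm_def bij_is_surj surj_f_inv_f)

lemma Perm_inv_apply: "g \<in> Perm \<Longrightarrow> inv g (g a) = a"
  by (simp add: Perm_def bij_is_inj)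

lemma Perm_inj: "g \<in> Perm \<Longrightarrow> g a = g b \<longleftrightarrow> a = b"
  by (metis Perm_inv_apply)

lemma Perm_inv:
  assumes "g \<in> Perm"
  shows "inv g \<in> Perm"
proof -
  have "inv g a = a" if "g a = a" for a
    using Perm_inv_apply[OF assms, of a] that by simp
  then have "{a. inv g a \<noteq> a} \<subseteq> {a. g a \<noteq> a}"
    by blast
  then show ?thesis
    using assms by (auto simp: Perm_def Sb_def intro: finite_subset bij_imp_bij_inv)
qed

lemma transpose_Perm: "transpose a b \<in> Perm"
proof -
  have "{c. transpose a b c \<noteq> c} \<subseteq> {a, b}"
    by (auto simp: transpose_def)
  then show ?thesis
    by (auto simp: Perm_def Sb_def intro: finite_subset)
qed

lemma Sb_override_on:
  assumes "m \<in> Sb" "finite S"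
  shows "override_on m f S \<in> Sb"
proof -
  have "{a. override_on m f S a \<noteq> a} \<subseteq> S \<union> {a. m a \<noteq> a}"
    by (auto simp: override_on_def)
  then show ?thesis
    using assms unfolding Sb_def by (auto intro: finite_subset)
qed

lemma Perm_extend:
  assumes "finite U" "inj_on h U"
  shows "\<exists>g\<in>Perm. \<forall>a\<in>U. g a = h a"
  using assms
proof (induction U rule: finite_induct)
  case empty
  then show ?case
    using Perm_id by blast
next
  case (insert a U)
  obtain g where g: "g \<in> Perm" "\<forall>u\<in>U. g u = h u"
    using insert by auto
  have "transpose (g a) (h a) (g u) = h u" if "u \<in> U" for u
  proof -
    have "h u \<noteq> h a" "g u \<noteq> g a"
      using insert that Perm_inj[OF g(1)] by (auto simp: inj_on_def)
    then show ?thesis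
      using g(2) that by auto
  qed
  then have "\<forall>u\<in>insert a U. (transpose (g a) (h a) \<circ> g) u = h u"
    by simp
  then show ?case
    using Perm_comp[OF transpose_Perm g(1)] by blast
qed

lemma Perm_glue:
  assumes "finite I"
    and K: "\<And>i. i \<in> I \<Longrightarrow> finite (K i)" and G: "\<And>i. i \<in> I \<Longrightarrow> G i \<in> Perm"
    and disj: "disjoint_family_on K I" and disj_image: "disjoint_family_on (\<lambda>i. G i ` K i) I"
  shows "\<exists>g\<in>Perm. \<forall>i\<in>I. \<forall>a\<in>K i. g a = G i a"
proof -
  define h where "h a = G (SOME i. i \<in> I \<and> a \<in> K i) a" for a
  have h: "h a = G i a" if "i \<in> I" "a \<in> K i" for i a
  proof -
    have "(SOME i. i \<in> I \<and> a \<in> K i) = i"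
      using that disj by (intro some_equality) (auto simp: disjoint_family_on_def)
    then show ?thesis
      by (simp add: h_def)
  qed
  have "inj_on h (\<Union>i\<in>I. K i)"
  proof (rule inj_onI)
    fix a b
    assume "a \<in> (\<Union>i\<in>I. K i)" "b \<in> (\<Union>i\<in>I. K i)" and hab: "h a = h b"
    then obtain i j where ij: "i \<in> I" "a \<in> K i" "j \<in> I" "b \<in> K j"
      by blast
    then have "G i a = G j b"
      using hab h by simp
    then have "i = j"
      using ij disj_image by (auto simp: disjoint_family_on_def)
    then show "a = b"
      using \<open>G i a = G j b\<close> Perm_inj[OF G[OF ij(1)]] by simp
  qed
  then obtain g where "g \<in> Perm" "\<forall>a\<in>(\<Union>i\<in>I. K i). g a = h a"
    using Perm_extend assms(1) K by blast
  then show ?thesis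
    using h by auto
qed

lemma Perm_avoid:
  assumes "finite C" "finite U"
  shows "\<exists>g\<in>Perm. g ` C \<inter> U = {}"
proof -
  obtain N where N: "\<forall>u\<in>U. u < N"
    using assms(2) finite_nat_set_iff_bounded by auto
  have "inj_on (\<lambda>a. a + N) C"
    by (simp add: inj_on_def)
  then obtain g where g: "g \<in> Perm" "\<forall>a\<in>C. g a = a + N"
    using Perm_extend[OF assms(1)] by blast
  then have "\<forall>a\<in>C. g a \<notin> U"
    using N by fastforce
  then show ?thesis
    using g(1) by blast
qed


section \<open>The relation generating \<open>F\<close>\<close>

lemma sym_F_rel: "sym (F_rel X act)"
proof -
  have "sym (Id_on (Sb \<times> X) \<union> F_gen X act \<union> (F_gen X act)\<inverse>)"
    by (auto simp: sym_def)
  then show ?thesis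
    unfolding F_rel_def by (rule sym_rtrancl)
qed

lemma trans_F_rel: "trans (F_rel X act)"
  unfolding F_rel_def by (rule trans_rtrancl)

lemma F_rel_refl: "(p, p) \<in> F_rel X act"
  by (simp add: F_rel_def)

lemma F_rel_trans: "(p, q) \<in> F_rel X act \<Longrightarrow> (q, r) \<in> F_rel X act \<Longrightarrow> (p, r) \<in> F_rel X act"
  using trans_F_rel by (rule transD)

lemma F_rel_least:
  assumes "F_gen X act \<subseteq> R" "refl R" "sym R" "trans R"
  shows "F_rel X act \<subseteq> R"
proof (rule subrelI)
  fix p q
  assume "(p, q) \<in> F_rel X act"
  then show "(p, q) \<in> R"
    unfolding F_rel_def
  proof (induction rule: rtrancl_induct)
    case base
    show ?case
      using assms(2) by (meson UNIV_I refl_onD)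
  next
    case (step q r)
    from step(2) have "(q, r) \<in> R"
    proof (elim UnE)
      assume "(q, r) \<in> Id_on (Sb \<times> X)"
      then show ?thesis
        using assms(2) by (auto dest: refl_onD)
    next
      assume "(q, r) \<in> F_gen X act"
      then show ?thesis
        using assms(1) by blast
    next
      assume "(q, r) \<in> (F_gen X act)\<inverse>"
      then show ?thesis
        using assms(1,3) by (auto dest: symD)
    qed
    then show ?case
      using step.IH assms(4) by (blast dest: transD)
  qed
qed

lemma F_rel_class_eq: "(p, q) \<in> F_rel X act \<Longrightarrow> F_rel X act `` {p} = F_rel X act `` {q}"
  using sym_F_rel F_rel_trans by (blast dest: symD)

lemma F_rel_class_eqD: "F_rel X act `` {p} = F_rel X act `` {q} \<Longrightarrow> (p, q) \<in> F_rel X act"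
  using F_rel_refl by blast

lemma F_rel_genI: "(p, q) \<in> F_gen X act \<Longrightarrow> (p, q) \<in> F_rel X act"
  unfolding F_rel_def by blast

lemma F_rel_actI: "m \<in> Sb \<Longrightarrow> g \<in> Perm \<Longrightarrow> x \<in> X \<Longrightarrow> ((m, act g x), (m \<circ> g, x)) \<in> F_rel X act"
  by (rule F_rel_genI) (auto simp: F_gen_def)

lemma F_rel_supportI:
  assumes "m \<in> Sb" "m' \<in> Sb" "x \<in> X" "finite C" "supports Perm act C x" "\<forall>a\<in>C. m a = m' a"
  shows "((m, x), (m', x)) \<in> F_rel X act"
proof (rule F_rel_genI)
  show "((m, x), (m', x)) \<in> F_gen X act"
    unfolding F_gen_def using assms by blast
qed

lemma F_genE:
  assumes "(p, q) \<in> F_gen X act"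
  obtains (perm) m g x where "p = (m, act g x)" "q = (m \<circ> g, x)" "m \<in> Sb" "g \<in> Perm" "x \<in> X"
  | (support) m m' x C where "p = (m, x)" "q = (m', x)" "m \<in> Sb" "m' \<in> Sb" "x \<in> X"
      "finite C" "supports Perm act C x" "\<forall>a\<in>C. m a = m' a"
  using assms unfolding F_gen_def by blast

lemma F_rel_comp_left:
  assumes "n \<in> Sb" "((m, x), (m', x')) \<in> F_rel X act"
  shows "((n \<circ> m, x), (n \<circ> m', x')) \<in> F_rel X act"
proof -
  define R where "R = inv_image (F_rel X act) (\<lambda>(m, x). (n \<circ> m, x))"
  have "(p, q) \<in> R" if "(p, q) \<in> F_gen X act" for p q
    using that
  proof (cases rule: F_genE)
    case (perm m g x)
    then show ?thesis
      using F_rel_actI[OF Sb_comp[OF assms(1) perm(3)] perm(4,5)] by (simp add: R_def comp_assoc)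
  next
    case (support m m' x C)
    have "((n \<circ> m, x), (n \<circ> m', x)) \<in> F_rel X act"
      using support Sb_comp[OF assms(1)] by (intro F_rel_supportI[of _ _ _ _ C]) auto
    then show ?thesis
      using support by (simp add: R_def)
  qed
  moreover have "refl R"
    by (simp add: R_def refl_on_def F_rel_refl)
  ultimately have "F_rel X act \<subseteq> R"
    unfolding R_def by (intro F_rel_least sym_inv_image trans_inv_image sym_F_rel trans_F_rel) auto
  then show ?thesis
    using assms(2) by (auto simp: R_def)
qed

lemma F_act_class:
  assumes "n \<in> Sb"
  shows "F_act X act n (F_rel X act `` {(m, x)}) = F_rel X act `` {(n \<circ> m, x)}"
proof -
  have "F_rel X act `` {(n \<circ> m', x')} = F_rel X act `` {(n \<circ> m, x)}"
    if "((m, x), (m', x')) \<in> F_rel X act" for m' x'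
    using F_rel_class_eq[OF F_rel_comp_left[OF assms that]] by simp
  then show ?thesis
    unfolding F_act_def using F_rel_refl by fastforce
qed

lemma F_carrierI: "m \<in> Sb \<Longrightarrow> x \<in> X \<Longrightarrow> F_rel X act `` {(m, x)} \<in> F_carrier X act"
  unfolding F_carrier_def by (rule quotientI) simp

lemma F_carrierE:
  assumes "c \<in> F_carrier X act"
  obtains m x where "m \<in> Sb" "x \<in> X" "c = F_rel X act `` {(m, x)}"
  using assms unfolding F_carrier_def by (auto elim: quotientE)

definition F_rel_perm :: "'x set \<Rightarrow> ((nat \<Rightarrow> nat) \<Rightarrow> 'x \<Rightarrow> 'x)
    \<Rightarrow> (((nat \<Rightarrow> nat) \<times> 'x) \<times> ((nat \<Rightarrow> nat) \<times> 'x)) set" where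
  "F_rel_perm X act =
     {((m, act g x), (m', x)) | m m' g x. m \<in> Sb \<and> m' \<in> Sb \<and> g \<in> Perm \<and> x \<in> X \<and>
        (\<exists>C. finite C \<and> supports Perm act C x \<and> (\<forall>a\<in>C. m' a = m (g a)))}"

lemma F_rel_permI:
  "m \<in> Sb \<Longrightarrow> m' \<in> Sb \<Longrightarrow> g \<in> Perm \<Longrightarrow> x \<in> X \<Longrightarrow> finite C \<Longrightarrow> supports Perm act C x
    \<Longrightarrow> \<forall>a\<in>C. m' a = m (g a) \<Longrightarrow> ((m, act g x), (m', x)) \<in> F_rel_perm X act"
  unfolding F_rel_perm_def by blast

lemma F_rel_permE:
  assumes "(p, q) \<in> F_rel_perm X act"
  obtains m m' g x C where "p = (m, act g x)" "q = (m', x)" "m \<in> Sb" "m' \<in> Sb" "g \<in> Perm" "x \<in> X"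
    "finite C" "supports Perm act C x" "\<forall>a\<in>C. m' a = m (g a)"
  using assms unfolding F_rel_perm_def by blast

lemma F_rel_perm_subset: "F_rel_perm X act \<subseteq> F_rel X act"
proof (rule subrelI)
  fix p q
  assume "(p, q) \<in> F_rel_perm X act"
  then obtain m m' g x C where pq: "p = (m, act g x)" "q = (m', x)"
    and "m \<in> Sb" "m' \<in> Sb" "g \<in> Perm" "x \<in> X" "finite C" "supports Perm act C x"
    and "\<forall>a\<in>C. m' a = m (g a)"
    by (rule F_rel_permE)
  then have "((m, act g x), (m \<circ> g, x)) \<in> F_rel X act" "((m \<circ> g, x), (m', x)) \<in> F_rel X act"
    by (simp_all add: F_rel_actI F_rel_supportI Sb_comp Perm_Sb)
  then show "(p, q) \<in> F_rel X act"
    unfolding pq by (rule F_rel_trans)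
qed

section \<open>Nominal \<open>Perm\<close>-sets\<close>

locale nominal_perm_set =
  fixes X :: "'x set" and act :: "(nat \<Rightarrow> nat) \<Rightarrow> 'x \<Rightarrow> 'x"
  assumes nominal: "nominal_set Perm X act"
begin

lemma act_closed: "g \<in> Perm \<Longrightarrow> x \<in> X \<Longrightarrow> act g x \<in> X"
  using nominal unfolding nominal_set_def by blast

lemma act_id: "x \<in> X \<Longrightarrow> act id x = x"
  using nominal unfolding nominal_set_def by blast

lemma act_comp: "g \<in> Perm \<Longrightarrow> h \<in> Perm \<Longrightarrow> x \<in> X \<Longrightarrow> act (g \<circ> h) x = act g (act h x)"
  using nominal unfolding nominal_set_def by blast

lemma finite_support: "x \<in> X \<Longrightarrow> \<exists>C. finite C \<and> supports Perm act C x"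
  using nominal unfolding nominal_set_def by blast

lemma act_inv_act:
  assumes "g \<in> Perm" "x \<in> X"
  shows "act (inv g) (act g x) = x"
proof -
  have "inv g \<circ> g = id"
    using Perm_inv_apply[OF assms(1)] by (auto simp: fun_eq_iff)
  then show ?thesis
    using act_comp[OF Perm_inv[OF assms(1)] assms] act_id[OF assms(2)] by simp
qed

lemma supports_fixed:
  "supports Perm act C x \<Longrightarrow> g \<in> Perm \<Longrightarrow> \<forall>a\<in>C. g a = a \<Longrightarrow> x \<in> X \<Longrightarrow> act g x = x"
  unfolding supports_def using act_id Perm_id by (metis id_apply)

lemma supports_if_fixed:
  assumes x: "x \<in> X" and fixed: "\<And>\<pi>. \<pi> \<in> Perm \<Longrightarrow> \<forall>a\<in>C. \<pi> a = a \<Longrightarrow> act \<pi> x = x"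
  shows "supports Perm act C x"
  unfolding supports_def
proof (intro ballI impI)
  fix m1 m2
  assume m: "m1 \<in> Perm" "m2 \<in> Perm" and agree: "\<forall>a\<in>C. m1 a = m2 a"
  define \<pi> where "\<pi> = inv m2 \<circ> m1"
  have \<pi>: "\<pi> \<in> Perm"
    unfolding \<pi>_def using m by (intro Perm_comp Perm_inv)
  have "\<forall>a\<in>C. \<pi> a = a"
    unfolding \<pi>_def using agree Perm_inv_apply[OF m(2)] by simp
  then have "act \<pi> x = x"
    using fixed \<pi> by blast
  moreover have "m2 \<circ> \<pi> = m1"
    unfolding \<pi>_def using Perm_apply_inv[OF m(2)] by (auto simp: fun_eq_iff)
  ultimately show "act m1 x = act m2 x"
    using act_comp[OF m(2) \<pi> x] by simp
qed

lemma supports_image: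
  assumes "supports Perm act C x" "x \<in> X" "h \<in> Perm"
  shows "supports Perm act (h ` C) (act h x)"
  unfolding supports_def
proof (intro ballI impI)
  fix m1 m2
  assume m: "m1 \<in> Perm" "m2 \<in> Perm" and "\<forall>a\<in>h ` C. m1 a = m2 a"
  then have "act (m1 \<circ> h) x = act (m2 \<circ> h) x"
    using assms(1,3) Perm_comp unfolding supports_def by auto
  then show "act m1 (act h x) = act m2 (act h x)"
    using act_comp m assms(2,3) by metis
qed

text \<open>If \<open>\<pi>\<close> fixes \<open>C - {a}\<close>, then on \<open>C\<close> it agrees with the transposition of \<open>a\<close> and
  \<open>c = \<pi> a\<close>; for a fresh \<open>b\<close> this transposition is \<open>(a b)(b c)(a b)\<close>, where \<open>(a b)\<close>
  fixes \<open>D\<close> and \<open>(b c)\<close> fixes \<open>C\<close>.\<close>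

lemma supports_Diff_singleton:
  assumes "finite C" "finite D" and C: "supports Perm act C x" and D: "supports Perm act D x"
    and x: "x \<in> X" and "a \<notin> D"
  shows "supports Perm act (C - {a}) x"
proof (rule supports_if_fixed[OF x])
  fix \<pi>
  assume \<pi>: "\<pi> \<in> Perm" and fixed: "\<forall>d\<in>C - {a}. \<pi> d = d"
  define c where "c = \<pi> a"
  have c_notin: "c \<notin> C - {a}"
    using fixed Perm_inj[OF \<pi>] by (auto simp: c_def)
  have "\<forall>d\<in>C. \<pi> d = transpose a c d"
  proof
    fix d
    assume "d \<in> C"
    then show "\<pi> d = transpose a c d"
      using fixed c_notin by (cases "d = a") (auto simp: c_def transpose_def)
  qed
  then have "act \<pi> x = act (transpose a c) x"
    using C \<pi> transpose_Perm unfolding supports_def by blast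
  also have "\<dots> = x"
  proof (cases "c = a")
    case True
    then show ?thesis
      using act_id[OF x] by simp
  next
    case False
    obtain b where b: "b \<notin> C \<union> D \<union> {a, c}"
      using ex_new_if_finite[OF infinite_UNIV_nat] assms(1,2) by (metis finite.simps finite_Un)
    have "\<forall>d\<in>D. transpose a b d = d"
      using \<open>a \<notin> D\<close> b by (intro ballI transpose_apply_other) auto
    then have ab: "act (transpose a b) x = x"
      using supports_fixed[OF D transpose_Perm _ x] by blast
    have "\<forall>d\<in>C. transpose b c d = d"
      using c_notin False b by (intro ballI transpose_apply_other) auto
    then have bc: "act (transpose b c) x = x"
      using supports_fixed[OF C transpose_Perm _ x] by blast
    have "transpose a c = transpose a b \<circ> (transpose b c \<circ> transpose a b)"
      using False b transpose_comp_triple[of a c b] by (simp add: comp_assoc)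
    then show ?thesis
      using ab bc act_comp[OF transpose_Perm Perm_comp[OF transpose_Perm transpose_Perm] x]
        act_comp[OF transpose_Perm transpose_Perm x] by simp
  qed
  finally show "act \<pi> x = x" .
qed

lemma supports_Int:
  assumes "finite C" "finite D" "supports Perm act C x" "supports Perm act D x" "x \<in> X"
  shows "supports Perm act (C \<inter> D) x"
proof -
  have "supports Perm act (C - F) x" if "finite F" "F \<subseteq> C - D" for F
    using that
  proof (induction F rule: finite_subset_induct)
    case empty
    then show ?case
      using assms(3) by simp
  next
    case (insert a F)
    have "C - insert a F = (C - F) - {a}"
      by blast
    then show ?case
      using supports_Diff_singleton[OF _ assms(2) insert.IH assms(4,5)] assms(1) insert.hyps(2)
      by auto
  qed
  moreover have "C \<inter> D = C - (C - D)"
    by blast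
  ultimately show ?thesis
    using assms(1) by (metis finite_Diff order_refl)
qed

lemma F_rel_perm_refl:
  assumes "m \<in> Sb" "x \<in> X"
  shows "((m, x), (m, x)) \<in> F_rel_perm X act"
proof -
  obtain C where "finite C" "supports Perm act C x"
    using finite_support[OF assms(2)] by blast
  then have "((m, act id x), (m, x)) \<in> F_rel_perm X act"
    using assms Perm_id by (intro F_rel_permI[where g = id and C = C]) auto
  then show ?thesis
    using act_id[OF assms(2)] by simp
qed

lemma sym_F_rel_perm: "sym (F_rel_perm X act)"
proof (rule symI)
  fix p q
  assume "(p, q) \<in> F_rel_perm X act"
  then obtain m m' g x C where pq: "p = (m, act g x)" "q = (m', x)"
    and m: "m \<in> Sb" "m' \<in> Sb" and g: "g \<in> Perm" and x: "x \<in> X"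
    and C: "finite C" "supports Perm act C x" and agree: "\<forall>a\<in>C. m' a = m (g a)"
    by (rule F_rel_permE)
  have "\<forall>a\<in>g ` C. m a = m' (inv g a)"
    using agree Perm_inv_apply[OF g] by auto
  then have "((m', act (inv g) (act g x)), (m, act g x)) \<in> F_rel_perm X act"
    using m C g x
    by (intro F_rel_permI[where C = "g ` C"] Perm_inv act_closed supports_image finite_imageI)
  then show "(q, p) \<in> F_rel_perm X act"
    unfolding pq act_inv_act[OF g x] .
qed

lemma trans_F_rel_perm: "trans (F_rel_perm X act)"
proof (rule transI)
  fix p q r
  assume "(p, q) \<in> F_rel_perm X act" "(q, r) \<in> F_rel_perm X act"
  obtain m m' g y C where pq: "p = (m, act g y)" "q = (m', y)"
    and m: "m \<in> Sb" and g: "g \<in> Perm" and y: "y \<in> X"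
    and C: "finite C" "supports Perm act C y" and agree: "\<forall>a\<in>C. m' a = m (g a)"
    using \<open>(p, q) \<in> F_rel_perm X act\<close> by (rule F_rel_permE)
  obtain m'' h x D where qr: "q = (m', act h x)" "r = (m'', x)"
    and m'': "m'' \<in> Sb" and h: "h \<in> Perm" and x: "x \<in> X"
    and D: "finite D" "supports Perm act D x" and agree': "\<forall>a\<in>D. m'' a = m' (h a)"
    using \<open>(q, r) \<in> F_rel_perm X act\<close> by (rule F_rel_permE) (use pq in simp)
  have y_eq: "y = act h x"
    using pq(2) qr(1) by simp
  have "supports Perm act (inv h ` C) x"
    using supports_image[OF C(2) y Perm_inv[OF h]] act_inv_act[OF h x] y_eq by simp
  then have DC: "supports Perm act (D \<inter> inv h ` C) x"
    using supports_Int D C(1) x by blast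
  have "\<forall>a\<in>D \<inter> inv h ` C. m'' a = m ((g \<circ> h) a)"
    using agree agree' Perm_apply_inv[OF h] by auto
  then have "((m, act (g \<circ> h) x), (m'', x)) \<in> F_rel_perm X act"
    using m m'' Perm_comp[OF g h] x D(1) DC
    by (intro F_rel_permI[where g = "g \<circ> h" and C = "D \<inter> inv h ` C"]) auto
  then show "(p, r) \<in> F_rel_perm X act"
    unfolding pq qr y_eq act_comp[OF g h x] .
qed

lemma F_gen_subset_F_rel_perm: "F_gen X act \<subseteq> F_rel_perm X act"
proof (rule subrelI)
  fix p q
  assume "(p, q) \<in> F_gen X act"
  then show "(p, q) \<in> F_rel_perm X act"
  proof (cases rule: F_genE)
    case (perm m g x)
    obtain C where "finite C" "supports Perm act C x"
      using finite_support[OF perm(5)] by blast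
    then show ?thesis
      using perm Sb_comp[OF perm(3) Perm_Sb[OF perm(4)]]
      by (auto intro!: F_rel_permI[where m' = "m \<circ> g" and g = g and C = C])
  next
    case (support m m' x C)
    have "((m', x), (m, x)) \<in> F_rel_perm X act"
      using support F_rel_permI[of m' m id x X C act] act_id Perm_id by simp
    then show ?thesis
      using sym_F_rel_perm support(1,2) by (blast dest: symD)
  qed
qed

lemma F_rel_eq_F_rel_perm: "F_rel X act = (F_rel_perm X act)\<^sup>="
proof
  show "F_rel X act \<subseteq> (F_rel_perm X act)\<^sup>="
    using F_gen_subset_F_rel_perm sym_F_rel_perm trans_F_rel_perm
    by (intro F_rel_least sym_Un sym_Id trans_on_reflcl refl_reflcl) auto
  show "(F_rel_perm X act)\<^sup>= \<subseteq> F_rel X act"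
    using F_rel_perm_subset F_rel_refl by auto
qed

lemma F_relE:
  assumes "((m, y), (m', x)) \<in> F_rel X act" "m \<in> Sb" "y \<in> X"
  obtains g C where "g \<in> Perm" "y = act g x" "finite C" "supports Perm act C x"
    "\<forall>a\<in>C. m' a = m (g a)"
proof -
  have "((m, y), (m', x)) \<in> F_rel_perm X act"
    using F_rel_eq_F_rel_perm assms F_rel_perm_refl by blast
  then show ?thesis
    using that by (auto elim: F_rel_permE)
qed

end

section \<open>Separated words and the letterwise map\<close>

lemma set_sep_word_subset: "w \<in> sep_words X act \<Longrightarrow> set w \<subseteq> X"
  by (induction rule: sep_words.induct) auto

lemma supports_word_letter:
  assumes "supports M (word_act act) U w" "y \<in> set w"
  shows "supports M act U y"
  unfolding supports_def
proof (intro ballI impI)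
  fix m1 m2
  assume "m1 \<in> M" "m2 \<in> M" "\<forall>a\<in>U. m1 a = m2 a"
  then have "map (act m1) w = map (act m2) w"
    using assms(1) unfolding supports_def word_act_def by blast
  then show "act m1 y = act m2 y"
    using assms(2) by (simp add: map_eq_conv)
qed

lemma supports_word_UN:
  assumes "\<And>i. i < length w \<Longrightarrow> supports M act (C i) (w ! i)"
  shows "supports M (word_act act) (\<Union>i<length w. C i) w"
  unfolding supports_def
proof (intro ballI impI)
  fix m1 m2
  assume m: "m1 \<in> M" "m2 \<in> M" and agree: "\<forall>a\<in>(\<Union>i<length w. C i). m1 a = m2 a"
  show "word_act act m1 w = word_act act m2 w"
    unfolding word_act_def
  proof (rule nth_equalityI)
    fix i
    assume "i < length (map (act m1) w)"
    then have "i < length w" "\<forall>a\<in>C i. m1 a = m2 a"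
      using agree by auto
    then have "act m1 (w ! i) = act m2 (w ! i)"
      using assms m unfolding supports_def by blast
    then show "map (act m1) w ! i = map (act m2) w ! i"
      using \<open>i < length w\<close> by simp
  qed simp
qed

definition letter_classes :: "'x set \<Rightarrow> ((nat \<Rightarrow> nat) \<Rightarrow> 'x \<Rightarrow> 'x) \<Rightarrow> (nat \<Rightarrow> nat) \<Rightarrow> 'x list
    \<Rightarrow> ((nat \<Rightarrow> nat) \<times> 'x) set list" where
  "letter_classes X act m w = map (\<lambda>x. F_rel X act `` {(m, x)}) w"

definition F_letters :: "'x set \<Rightarrow> ((nat \<Rightarrow> nat) \<Rightarrow> 'x \<Rightarrow> 'x) \<Rightarrow> ((nat \<Rightarrow> nat) \<times> 'x list) set
    \<Rightarrow> ((nat \<Rightarrow> nat) \<times> 'x) set list" where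
  "F_letters X act c = the_elem (case_prod (letter_classes X act) ` c)"

lemma letter_classes_F_rel:
  assumes "((m, w), (m', w')) \<in> F_rel (sep_words X act) (word_act act)"
  shows "letter_classes X act m w = letter_classes X act m' w'"
proof -
  define R where "R = inv_image Id (case_prod (letter_classes X act))"
  have "(p, q) \<in> R" if "(p, q) \<in> F_gen (sep_words X act) (word_act act)" for p q
    using that
  proof (cases rule: F_genE)
    case (perm m g w)
    have "F_rel X act `` {(m, act g x)} = F_rel X act `` {(m \<circ> g, x)}" if "x \<in> set w" for x
      using set_sep_word_subset[OF perm(5)] that by (intro F_rel_class_eq F_rel_actI perm(3,4)) auto
    then show ?thesis
      using perm by (simp add: R_def letter_classes_def word_act_def)
  next
    case (support m m' w C)
    have "F_rel X act `` {(m, x)} = F_rel X act `` {(m', x)}" if "x \<in> set w" for x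
      using set_sep_word_subset[OF support(5)] that support(3,4,6,8)
        supports_word_letter[OF support(7) that]
      by (intro F_rel_class_eq F_rel_supportI[where C = C]) auto
    then show ?thesis
      using support by (simp add: R_def letter_classes_def)
  qed
  moreover have "refl R"
    by (simp add: R_def refl_on_def)
  ultimately have "F_rel (sep_words X act) (word_act act) \<subseteq> R"
    unfolding R_def by (intro F_rel_least sym_inv_image trans_inv_image sym_Id trans_Id) auto
  then show ?thesis
    using assms by (auto simp: R_def)
qed

lemma F_letters_class:
  "F_letters X act (F_rel (sep_words X act) (word_act act) `` {(m, w)}) = letter_classes X act m w"
  unfolding F_letters_def
proof (rule the_elem_image_unique)
  show "F_rel (sep_words X act) (word_act act) `` {(m, w)} \<noteq> {}"
    using F_rel_refl by blast
  fix p
  assume "p \<in> F_rel (sep_words X act) (word_act act) `` {(m, w)}"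
  then show "case_prod (letter_classes X act) p = letter_classes X act m w"
    by (cases p) (simp add: letter_classes_F_rel)
qed

lemma F_letters_in_lists:
  assumes "c \<in> F_carrier (sep_words X act) (word_act act)"
  shows "F_letters X act c \<in> lists (F_carrier X act)"
proof -
  obtain m w where "m \<in> Sb" "w \<in> sep_words X act"
    and c: "c = F_rel (sep_words X act) (word_act act) `` {(m, w)}"
    using assms by (rule F_carrierE)
  then have "F_rel X act `` {(m, x)} \<in> F_carrier X act" if "x \<in> set w" for x
    using that set_sep_word_subset by (intro F_carrierI) auto
  then show ?thesis
    unfolding c F_letters_class by (auto simp: letter_classes_def)
qed

lemma F_letters_equivariant:
  assumes "n \<in> Sb" "c \<in> F_carrier (sep_words X act) (word_act act)"
  shows "F_letters X act (F_act (sep_words X act) (word_act act) n c)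
    = word_act (F_act X act) n (F_letters X act c)"
proof -
  obtain m w where c: "c = F_rel (sep_words X act) (word_act act) `` {(m, w)}"
    using assms(2) by (rule F_carrierE)
  show ?thesis
    unfolding c F_act_class[OF assms(1)] F_letters_class
    by (simp add: letter_classes_def word_act_def F_act_class[OF assms(1)])
qed

context nominal_perm_set
begin

lemma sep_word_disjoint_supports:
  assumes "w \<in> sep_words X act"
  shows "\<exists>D. (\<forall>i<length w. finite (D i) \<and> supports Perm act (D i) (w ! i))
    \<and> disjoint_family_on D {..<length w}"
  using assms
proof (induction rule: sep_words.induct)
  case Nil
  show ?case
    by (simp add: disjoint_family_on_def)
next
  case (snoc w x)
  obtain D where D: "\<forall>i<length w. finite (D i) \<and> supports Perm act (D i) (w ! i)"
    and disjD: "disjoint_family_on D {..<length w}"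
    using snoc.IH by blast
  obtain C E where CE: "finite C" "finite E" "supports Perm (word_act act) C w"
    "supports Perm act E x" "C \<inter> E = {}"
    using snoc.hyps(3) unfolding separated_def by blast
  define D' where "D' i = (if i < length w then D i \<inter> C else E)" for i
  have "finite (D' i) \<and> supports Perm act (D' i) ((w @ [x]) ! i)" if "i < length (w @ [x])" for i
  proof (cases "i < length w")
    case True
    have "supports Perm act (D i \<inter> C) (w ! i)"
      using D True CE(1) supports_word_letter[OF CE(3)] set_sep_word_subset[OF snoc.hyps(1)]
      by (intro supports_Int) auto
    then show ?thesis
      using True D by (simp add: D'_def nth_append)
  next
    case False
    then show ?thesis
      using that CE by (simp add: D'_def nth_append)
  qed
  moreover have "disjoint_family_on D' {..<length (w @ [x])}"
    using disjD CE(5) by (auto simp: disjoint_family_on_def D'_def)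
  ultimately show ?case
    by blast
qed

text \<open>The pieces \<open>K i\<close> inherit disjointness from the supports of the letters of \<open>w'\<close>, and
  their images under \<open>G i\<close> from the supports of the letters of \<open>w\<close>.\<close>

lemma sep_words_disjoint_pieces:
  assumes w: "w \<in> sep_words X act" and w': "w' \<in> sep_words X act" and len: "length w = length w'"
    and G: "\<And>i. i < length w' \<Longrightarrow> G i \<in> Perm \<and> w ! i = act (G i) (w' ! i)"
    and C: "\<And>i. i < length w' \<Longrightarrow> finite (C i) \<and> supports Perm act (C i) (w' ! i)"
  obtains K where "\<forall>i<length w'. finite (K i) \<and> supports Perm act (K i) (w' ! i) \<and> K i \<subseteq> C i"
    "disjoint_family_on K {..<length w'}" "disjoint_family_on (\<lambda>i. G i ` K i) {..<length w'}"
proof -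
  let ?n = "length w'"
  have X: "w ! i \<in> X" "w' ! i \<in> X" if "i < ?n" for i
    using that len set_sep_word_subset[OF w] set_sep_word_subset[OF w'] by auto
  obtain D where D: "\<forall>i<?n. finite (D i) \<and> supports Perm act (D i) (w' ! i)"
    and disjD: "disjoint_family_on D {..<?n}"
    using sep_word_disjoint_supports[OF w'] by blast
  obtain E where E: "\<forall>i<?n. finite (E i) \<and> supports Perm act (E i) (w ! i)"
    and disjE: "disjoint_family_on E {..<?n}"
    using sep_word_disjoint_supports[OF w] len by auto
  define K where "K i = C i \<inter> D i \<inter> inv (G i) ` E i" for i
  have "\<forall>i<?n. finite (K i) \<and> supports Perm act (K i) (w' ! i) \<and> K i \<subseteq> C i"
  proof (intro allI impI)
    fix i
    assume i: "i < ?n"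
    have "supports Perm act (inv (G i) ` E i) (act (inv (G i)) (w ! i))"
      using E i X[OF i] G[OF i] by (intro supports_image Perm_inv) auto
    then have "supports Perm act (inv (G i) ` E i) (w' ! i)"
      using G[OF i] X[OF i] by (simp add: act_inv_act)
    then show "finite (K i) \<and> supports Perm act (K i) (w' ! i) \<and> K i \<subseteq> C i"
      unfolding K_def using C D E i X[OF i] by (intro conjI supports_Int) auto
  qed
  moreover have "disjoint_family_on K {..<?n}"
    using disjD by (rule disjoint_family_on_bisimulation) (unfold K_def, blast)
  moreover have "disjoint_family_on (\<lambda>i. G i ` K i) {..<?n}"
  proof (rule disjoint_family_on_bisimulation[OF disjE])
    have "G i ` K i \<subseteq> E i" if "i < ?n" for i
      using Perm_apply_inv[of "G i"] G[OF that] by (auto simp: K_def)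
    then show "G i ` K i \<inter> G j ` K j = {}" if "i \<in> {..<?n}" "j \<in> {..<?n}" "E i \<inter> E j = {}" for i j
      using that by blast
  qed
  ultimately show ?thesis
    by (rule that)
qed

lemma sep_words_perm_glue:
  assumes w: "w \<in> sep_words X act" and w': "w' \<in> sep_words X act" and len: "length w = length w'"
    and G: "\<And>i. i < length w' \<Longrightarrow> G i \<in> Perm \<and> w ! i = act (G i) (w' ! i)"
    and C: "\<And>i. i < length w' \<Longrightarrow> finite (C i) \<and> supports Perm act (C i) (w' ! i)"
  obtains g U where "g \<in> Perm" "w = word_act act g w'"
    "finite U" "supports Perm (word_act act) U w'"
    "\<forall>a\<in>U. \<exists>i<length w'. a \<in> C i \<and> g a = G i a"
proof -
  let ?n = "length w'"
  obtain K where K: "\<forall>i<?n. finite (K i) \<and> supports Perm act (K i) (w' ! i) \<and> K i \<subseteq> C i"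
    and disj: "disjoint_family_on K {..<?n}" "disjoint_family_on (\<lambda>i. G i ` K i) {..<?n}"
    by (rule sep_words_disjoint_pieces[OF w w' len G C])
  have "\<exists>g\<in>Perm. \<forall>i\<in>{..<?n}. \<forall>a\<in>K i. g a = G i a"
    using K G disj by (intro Perm_glue) auto
  then obtain g where g: "g \<in> Perm" "\<And>i a. i < ?n \<Longrightarrow> a \<in> K i \<Longrightarrow> g a = G i a"
    by auto
  have "w = word_act act g w'"
    unfolding word_act_def
  proof (rule nth_equalityI)
    fix i
    assume "i < length w"
    then have i: "i < ?n"
      using len by simp
    have "\<forall>a\<in>K i. g a = G i a"
      using g(2)[OF i] by blast
    then have "act g (w' ! i) = act (G i) (w' ! i)"
      using K i g(1) G[OF i] unfolding supports_def by blast
    then show "w ! i = map (act g) w' ! i"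
      using G[OF i] i by simp
  qed (simp add: len)
  moreover have "supports Perm (word_act act) (\<Union>i<?n. K i) w'"
    using K by (intro supports_word_UN) auto
  moreover have "finite (\<Union>i<?n. K i)"
    using K by auto
  moreover have "\<forall>a\<in>(\<Union>i<?n. K i). \<exists>i<?n. a \<in> C i \<and> g a = G i a"
    using g(2) K by blast
  ultimately show ?thesis
    using that g(1) by blast
qed

lemma F_rel_if_letter_classes_eq:
  assumes w: "w \<in> sep_words X act" and w': "w' \<in> sep_words X act" and m: "m \<in> Sb" "m' \<in> Sb"
    and eq: "letter_classes X act m w = letter_classes X act m' w'"
  shows "((m, w), (m', w')) \<in> F_rel (sep_words X act) (word_act act)"
proof -
  have len: "length w = length w'"
    using eq unfolding letter_classes_def by (metis length_map)
  have "\<exists>g C. g \<in> Perm \<and> w ! i = act g (w' ! i) \<and> finite C \<and> supports Perm act C (w' ! i)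
      \<and> (\<forall>a\<in>C. m' a = m (g a))" if i: "i < length w'" for i
  proof -
    have "F_rel X act `` {(m, w ! i)} = F_rel X act `` {(m', w' ! i)}"
      using arg_cong[OF eq, of "\<lambda>L. L ! i"] i len by (simp add: letter_classes_def)
    then have "((m, w ! i), (m', w' ! i)) \<in> F_rel X act"
      by (rule F_rel_class_eqD)
    moreover have "w ! i \<in> X"
      using set_sep_word_subset[OF w] i len by auto
    ultimately show ?thesis
      using m(1) by (metis F_relE)
  qed
  then obtain G C where GC: "\<And>i. i < length w' \<Longrightarrow> G i \<in> Perm \<and> w ! i = act (G i) (w' ! i)
      \<and> finite (C i) \<and> supports Perm act (C i) (w' ! i) \<and> (\<forall>a\<in>C i. m' a = m (G i a))"
    by metis
  have G: "\<And>i. i < length w' \<Longrightarrow> G i \<in> Perm \<and> w ! i = act (G i) (w' ! i)"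
    and C: "\<And>i. i < length w' \<Longrightarrow> finite (C i) \<and> supports Perm act (C i) (w' ! i)"
    using GC by blast+
  obtain g U where g: "g \<in> Perm" "w = word_act act g w'"
    and U: "finite U" "supports Perm (word_act act) U w'"
    and gU: "\<forall>a\<in>U. \<exists>i<length w'. a \<in> C i \<and> g a = G i a"
    by (rule sep_words_perm_glue[OF w w' len G C])
  have "\<forall>a\<in>U. m' a = m (g a)"
    using gU GC by metis
  then have "((m, word_act act g w'), (m', w')) \<in> F_rel_perm (sep_words X act) (word_act act)"
    using m g(1) w' U by (intro F_rel_permI[where C = U])
  then show ?thesis
    using F_rel_perm_subset g(2) by auto
qed

lemma inj_on_F_letters: "inj_on (F_letters X act) (F_carrier (sep_words X act) (word_act act))"
proof (rule inj_onI)
  fix c c'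
  assume "c \<in> F_carrier (sep_words X act) (word_act act)"
    and "c' \<in> F_carrier (sep_words X act) (word_act act)"
    and eq: "F_letters X act c = F_letters X act c'"
  then obtain m w m' w' where mw: "m \<in> Sb" "w \<in> sep_words X act" "m' \<in> Sb" "w' \<in> sep_words X act"
    and c: "c = F_rel (sep_words X act) (word_act act) `` {(m, w)}"
    and c': "c' = F_rel (sep_words X act) (word_act act) `` {(m', w')}"
    by (metis F_carrierE)
  have "letter_classes X act m w = letter_classes X act m' w'"
    using eq unfolding c c' F_letters_class .
  then show "c = c'"
    unfolding c c' using mw by (intro F_rel_class_eq F_rel_if_letter_classes_eq)
qed

text \<open>To append the class of \<open>(m1, x1)\<close> to \<open>[m, w]\<close>, move the support of \<open>x1\<close> away from that of
  \<open>w\<close> by some \<open>g\<close> and let the substitution act as \<open>m1 \<circ> inv g\<close> on the moved support.\<close>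

lemma sep_word_snoc_class:
  assumes m: "m \<in> Sb" and w: "w \<in> sep_words X act" and m1: "m1 \<in> Sb" and x1: "x1 \<in> X"
  obtains m' x' where "m' \<in> Sb" "w @ [x'] \<in> sep_words X act"
    "letter_classes X act m' (w @ [x']) = letter_classes X act m w @ [F_rel X act `` {(m1, x1)}]"
proof -
  obtain D where D: "\<forall>i<length w. finite (D i) \<and> supports Perm act (D i) (w ! i)"
    using sep_word_disjoint_supports[OF w] by blast
  define U where "U = (\<Union>i<length w. D i)"
  have U: "finite U" "supports Perm (word_act act) U w"
    unfolding U_def using D by (auto intro: supports_word_UN)
  obtain C where C: "finite C" "supports Perm act C x1"
    using finite_support[OF x1] by blast
  obtain g where g: "g \<in> Perm" "g ` C \<inter> U = {}"
    using Perm_avoid[OF C(1) U(1)] by blast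
  define m' where "m' = override_on m (m1 \<circ> inv g) (g ` C)"
  define x' where "x' = act g x1"
  have m': "m' \<in> Sb"
    unfolding m'_def using Sb_override_on[OF m] C(1) by blast
  have x': "x' \<in> X" "supports Perm act (g ` C) x'"
    unfolding x'_def using act_closed supports_image g(1) C(2) x1 by auto
  have "separated Perm (word_act act) act w x'"
    unfolding separated_def using U x' C(1) g(2) by blast
  then have "w @ [x'] \<in> sep_words X act"
    using w x'(1) by (rule sep_words.snoc[rotated -1])
  moreover have "F_rel X act `` {(m', x)} = F_rel X act `` {(m, x)}" if "x \<in> set w" for x
  proof (rule F_rel_class_eq, rule F_rel_supportI[OF m' m])
    show "x \<in> X" "supports Perm act U x"
      using that set_sep_word_subset[OF w] supports_word_letter[OF U(2)] by auto
    show "\<forall>a\<in>U. m' a = m a"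
      using g(2) unfolding m'_def by (intro ballI override_on_apply_notin) blast
  qed (rule U(1))
  moreover have "F_rel X act `` {(m', x')} = F_rel X act `` {(m1, x1)}"
  proof (rule F_rel_class_eq)
    have "\<forall>a\<in>C. m1 a = m' (g a)"
      using Perm_inv_apply[OF g(1)] by (simp add: m'_def)
    then have "((m', x'), (m1, x1)) \<in> F_rel_perm X act"
      unfolding x'_def using m' m1 g(1) x1 C by (intro F_rel_permI)
    then show "((m', x'), (m1, x1)) \<in> F_rel X act"
      using F_rel_perm_subset by blast
  qed
  ultimately show ?thesis
    using that m' by (simp add: letter_classes_def)
qed

lemma F_letters_image:
  "F_letters X act ` F_carrier (sep_words X act) (word_act act) = lists (F_carrier X act)"
proof
  show "F_letters X act ` F_carrier (sep_words X act) (word_act act) \<subseteq> lists (F_carrier X act)"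
    using F_letters_in_lists by blast
next
  show "lists (F_carrier X act) \<subseteq> F_letters X act ` F_carrier (sep_words X act) (word_act act)"
  proof
    fix L
    assume "L \<in> lists (F_carrier X act)"
    then have "\<exists>m w. m \<in> Sb \<and> w \<in> sep_words X act \<and> letter_classes X act m w = L"
    proof (induction L rule: rev_induct)
      case Nil
      show ?case
        using Sb_id sep_words.Nil by (auto simp: letter_classes_def)
    next
      case (snoc c L)
      then obtain m w where "m \<in> Sb" "w \<in> sep_words X act" "letter_classes X act m w = L"
        by auto
      moreover obtain m1 x1 where "m1 \<in> Sb" "x1 \<in> X" "c = F_rel X act `` {(m1, x1)}"
        using snoc.prems by (auto elim: F_carrierE)
      ultimately show ?case
        by (metis sep_word_snoc_class)
    qed
    then show "L \<in> F_letters X act ` F_carrier (sep_words X act) (word_act act)"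
      by (metis F_carrierI F_letters_class image_eqI)
  qed
qed

end

theorem mainTheorem7:
  fixes X :: "'x set" and act :: "(nat \<Rightarrow> nat) \<Rightarrow> 'x \<Rightarrow> 'x"
  assumes "nominal_set Perm X act"
  shows "\<exists>f. nom_iso Sb
           (F_carrier (sep_words X act) (word_act act))
           (F_act (sep_words X act) (word_act act))
           (lists (F_carrier X act))
           (word_act (F_act X act))
           f"
proof -
  interpret nominal_perm_set X act
    using assms by (rule nominal_perm_set.intro)
  have "bij_betw (F_letters X act)
      (F_carrier (sep_words X act) (word_act act)) (lists (F_carrier X act))"
    unfolding bij_betw_def using inj_on_F_letters F_letters_image by blast
  then show ?thesis
    unfolding nom_iso_def using F_letters_equivariant by blast
qed

end
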